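(* Let $(\mathfrak{g},[\cdot,\ldots,\cdot],\varepsilon,\alpha)$ be an $n$-Hom-Lie color algebra. Then $\mathfrak{g}$ admits a product structure if and only if $\mathfrak{g}$ admits a decomposition $\mathfrak{g}=\mathfrak{g}_+\oplus\mathfrak{g}_-$ (so that $\mathfrak{g}_\gamma=(\mathfrak{g}_+\cap\mathfrak{g}_\gamma)\oplus(\mathfrak{g}_-\cap\mathfrak{g}_\gamma)$ for every $\gamma\in\Gamma$) into two nonzero $\Gamma$-graded subalgebras $\mathfrak{g}_+$ and $\mathfrak{g}_-$. Moreover, if $\mathcal{P}$ is a product structure, the eigenspaces $\mathfrak{g}_+=\{x:\mathcal{P}x=x\}$ and $\mathfrak{g}_-=\{x:\mathcal{P}x=-x\}$ give such a decomposition.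
   Context: $\mathbb{K}$ is a field of characteristic zero and $\Gamma$ an abelian group. A bicharacter is a map $\varepsilon:\Gamma\times\Gamma\to\mathbb{K}\setminus\{0\}$ with $\varepsilon(a,b)\varepsilon(b,a)=1$, $\varepsilon(a,b+c)=\varepsilon(a,b)\varepsilon(a,c)$, $\varepsilon(a+b,c)=\varepsilon(a,c)\varepsilon(b,c)$. For homogeneous $x,y$, $\varepsilon(x,y)=\varepsilon(|x|,|y|)$ and $\varepsilon(x,y_1+\dots+y_k)=\varepsilon(|x|,|y_1|+\dots+|y_k|)$ ($=1$ for an empty sum). An $n$-Hom-Lie color algebra $(\mathfrak{g},[\cdot,\ldots,\cdot],\varepsilon,\alpha)$ is a $\Gamma$-graded vector space with an $n$-linear bracket of degree zero, a bicharacter $\varepsilon$ and a degree-zero linear map $\alpha$ such that for homogeneous elements: (i) $[x_1,\ldots,x_i,x_{i+1},\ldots,x_n]=-\varepsilon(x_i,x_{i+1})[x_1,\ldots,x_{i+1},x_i,\ldots,x_n]$; (ii) $[\alpha(x_1),\ldots,\alpha(x_{n-1}),[y_1,\ldots,y_n]]=\sum_{i=1}^n\varepsilon(x_1+\dots+x_{n-1},y_1+\dots+y_{i-1})[\alpha(y_1),\ldots,\alpha(y_{i-1}),[x_1,\ldots,x_{n-1},y_i],\alpha(y_{i+1}),\ldots,\alpha(y_n)]$. A $\Gamma$-graded subalgebra is a graded subspace $\mathfrak{h}=\bigoplus_\gamma(\mathfrak{h}\cap\mathfrak{g}_\gamma)$ with $\alpha(\mathfrak{h})\subseteq\mathfrak{h}$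 and $[\mathfrak{h},\ldots,\mathfrak{h}]\subseteq\mathfrak{h}$. For a degree-zero linear $\mathcal{N}$ set $[\cdot]^0_{\mathcal{N}}=[\cdot]$ and $[x_1,\ldots,x_n]^j_{\mathcal{N}}=\sum_{i_1<\dots<i_j}[x_1,\ldots,\mathcal{N}x_{i_1},\ldots,\mathcal{N}x_{i_j},\ldots,x_n]-\mathcal{N}([x_1,\ldots,x_n]^{j-1}_{\mathcal{N}})$ for $1\le j\le n-1$ ($\mathcal{N}$ applied exactly at positions $i_1,\ldots,i_j$); $\mathcal{N}$ is a Nijenhuis operator if $\mathcal{N}\alpha=\alpha\mathcal{N}$ and $[\mathcal{N}x_1,\ldots,\mathcal{N}x_n]=\mathcal{N}([x_1,\ldots,x_n]^{n-1}_{\mathcal{N}})$. An almost product structure is a degree-zero linear map $\mathcal{P}:\mathfrak{g}\to\mathfrak{g}$ with $\mathcal{P}\neq\pm\mathrm{id}_{\mathfrak{g}}$ and $\mathcal{P}^2=\mathrm{id}_{\mathfrak{g}}$; a product structure is an almost product structure which is a Nijenhuis operator. *)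

theory Defs
  imports Complex_Main
begin

text \<open>
  Homogeneous elements are handled by quantifying over
  explicit degrees (lists of degrees ds with xs!i in Gr (ds!i)).
\<close>

definition bicharacter :: "('g::ab_group_add \<Rightarrow> 'g \<Rightarrow> 'k::field) \<Rightarrow> bool" where
  "bicharacter eps \<longleftrightarrow>
     (\<forall>a b. eps a b \<noteq> 0) \<and>
     (\<forall>a b. eps a b * eps b a = 1) \<and>
     (\<forall>a b c. eps a (b + c) = eps a b * eps a c) \<and>
     (\<forall>a b c. eps (a + b) c = eps a c * eps b c)"

definition graded_space :: "('k::field \<Rightarrow> 'v::ab_group_add \<Rightarrow> 'v) \<Rightarrow> ('g \<Rightarrow> 'v set) \<Rightarrow> bool" where
  "graded_space scale Gr \<longleftrightarrow>
     vector_space scale \<and>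
     (\<forall>\<gamma>. module.subspace scale (Gr \<gamma>)) \<and>
     (\<forall>v. \<exists>!c::'g \<Rightarrow> 'v. finite {\<gamma>. c \<gamma> \<noteq> 0} \<and> (\<forall>\<gamma>. c \<gamma> \<in> Gr \<gamma>)
                         \<and> v = sum c {\<gamma>. c \<gamma> \<noteq> 0})"

definition deg0_linear :: "('k::field \<Rightarrow> 'v::ab_group_add \<Rightarrow> 'v) \<Rightarrow> ('g \<Rightarrow> 'v set) \<Rightarrow> ('v \<Rightarrow> 'v) \<Rightarrow> bool" where
  "deg0_linear scale Gr f \<longleftrightarrow> Vector_Spaces.linear scale scale f \<and> (\<forall>\<gamma>. \<forall>x\<in>Gr \<gamma>. f x \<in> Gr \<gamma>)"

definition multilinear :: "('k::field \<Rightarrow> 'v::ab_group_add \<Rightarrow> 'v) \<Rightarrow> nat \<Rightarrow> ('v list \<Rightarrow> 'v) \<Rightarrow> bool" where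
  "multilinear scale n br \<longleftrightarrow>
     (\<forall>xs i a b. length xs = n \<longrightarrow> i < n \<longrightarrow>
         br (xs[i := a + b]) = br (xs[i := a]) + br (xs[i := b])) \<and>
     (\<forall>xs i k a. length xs = n \<longrightarrow> i < n \<longrightarrow>
         br (xs[i := scale k a]) = scale k (br (xs[i := a])))"

definition homog :: "('g \<Rightarrow> 'v set) \<Rightarrow> 'v list \<Rightarrow> 'g list \<Rightarrow> bool" where
  "homog Gr xs ds \<longleftrightarrow> length xs = length ds \<and> (\<forall>i<length xs. xs ! i \<in> Gr (ds ! i))"

definition n_hom_lie_color ::
  "('k::field_char_0 \<Rightarrow> 'v::ab_group_add \<Rightarrow> 'v) \<Rightarrow> ('g::ab_group_add \<Rightarrow> 'v set) \<Rightarrow> nat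
   \<Rightarrow> ('v list \<Rightarrow> 'v) \<Rightarrow> ('g \<Rightarrow> 'g \<Rightarrow> 'k) \<Rightarrow> ('v \<Rightarrow> 'v) \<Rightarrow> bool" where
  "n_hom_lie_color scale Gr n br eps alpha \<longleftrightarrow>
     2 \<le> n \<and>
     graded_space scale Gr \<and>
     bicharacter eps \<and>
     multilinear scale n br \<and>
     (\<forall>xs ds. length xs = n \<longrightarrow> homog Gr xs ds \<longrightarrow> br xs \<in> Gr (sum_list ds)) \<and>
     deg0_linear scale Gr alpha \<and>
     \<comment> \<open>(i) epsilon-skew-symmetry\<close>
     (\<forall>xs ds i. length xs = n \<longrightarrow> homog Gr xs ds \<longrightarrow> Suc i < n \<longrightarrow>
        br xs = - scale (eps (ds ! i) (ds ! Suc i))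
                   (br (xs[i := xs ! Suc i, Suc i := xs ! i]))) \<and>
     \<comment> \<open>(ii) epsilon-Hom-Filippov--Jacobi identity\<close>
     (\<forall>xs dx ys dy. length xs = n - 1 \<longrightarrow> length ys = n \<longrightarrow>
        homog Gr xs dx \<longrightarrow> homog Gr ys dy \<longrightarrow>
        br (map alpha xs @ [br ys]) =
          (\<Sum>i<n. scale (eps (sum_list dx) (sum_list (take i dy)))
             (br (map alpha (take i ys) @ [br (xs @ [ys ! i])] @ map alpha (drop (Suc i) ys)))))"

definition graded_subalgebra ::
  "('k::field \<Rightarrow> 'v::ab_group_add \<Rightarrow> 'v) \<Rightarrow> ('g \<Rightarrow> 'v set) \<Rightarrow> nat
   \<Rightarrow> ('v list \<Rightarrow> 'v) \<Rightarrow> ('v \<Rightarrow> 'v) \<Rightarrow> 'v set \<Rightarrow> bool" where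
  "graded_subalgebra scale Gr n br alpha H \<longleftrightarrow>
     module.subspace scale H \<and>
     H = module.span scale (\<Union>\<gamma>. H \<inter> Gr \<gamma>) \<and>
     alpha ` H \<subseteq> H \<and>
     (\<forall>xs. length xs = n \<longrightarrow> set xs \<subseteq> H \<longrightarrow> br xs \<in> H)"

definition apply_at :: "('v \<Rightarrow> 'v) \<Rightarrow> nat set \<Rightarrow> 'v list \<Rightarrow> 'v list" where
  "apply_at N S xs = map (\<lambda>i. if i \<in> S then N (xs ! i) else xs ! i) [0..<length xs]"

fun bracketN :: "('v::ab_group_add list \<Rightarrow> 'v) \<Rightarrow> ('v \<Rightarrow> 'v) \<Rightarrow> nat \<Rightarrow> 'v list \<Rightarrow> 'v" where
  "bracketN br N 0 xs = br xs"
| "bracketN br N (Suc j) xs =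
     (\<Sum>S\<in>{S. S \<subseteq> {0..<length xs} \<and> card S = Suc j}. br (apply_at N S xs))
     - N (bracketN br N j xs)"

definition nijenhuis ::
  "('k::field \<Rightarrow> 'v::ab_group_add \<Rightarrow> 'v) \<Rightarrow> ('g \<Rightarrow> 'v set) \<Rightarrow> nat
   \<Rightarrow> ('v list \<Rightarrow> 'v) \<Rightarrow> ('v \<Rightarrow> 'v) \<Rightarrow> ('v \<Rightarrow> 'v) \<Rightarrow> bool" where
  "nijenhuis scale Gr n br alpha N \<longleftrightarrow>
     deg0_linear scale Gr N \<and> N \<circ> alpha = alpha \<circ> N \<and>
     (\<forall>xs. length xs = n \<longrightarrow> br (map N xs) = N (bracketN br N (n - 1) xs))"

definition almost_product ::
  "('k::field \<Rightarrow> 'v::ab_group_add \<Rightarrow> 'v) \<Rightarrow> ('g \<Rightarrow> 'v set) \<Rightarrow> ('v \<Rightarrow> 'v) \<Rightarrow> bool" where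
  "almost_product scale Gr P \<longleftrightarrow>
     deg0_linear scale Gr P \<and> P \<noteq> id \<and> P \<noteq> (\<lambda>x. - x) \<and> P \<circ> P = id"

definition product_structure ::
  "('k::field \<Rightarrow> 'v::ab_group_add \<Rightarrow> 'v) \<Rightarrow> ('g \<Rightarrow> 'v set) \<Rightarrow> nat
   \<Rightarrow> ('v list \<Rightarrow> 'v) \<Rightarrow> ('v \<Rightarrow> 'v) \<Rightarrow> ('v \<Rightarrow> 'v) \<Rightarrow> bool" where
  "product_structure scale Gr n br alpha P \<longleftrightarrow>
     almost_product scale Gr P \<and> nijenhuis scale Gr n br alpha P"

definition subalgebra_decomposition ::
  "('k::field \<Rightarrow> 'v::ab_group_add \<Rightarrow> 'v) \<Rightarrow> ('g \<Rightarrow> 'v set) \<Rightarrow> nat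
   \<Rightarrow> ('v list \<Rightarrow> 'v) \<Rightarrow> ('v \<Rightarrow> 'v) \<Rightarrow> 'v set \<Rightarrow> 'v set \<Rightarrow> bool" where
  "subalgebra_decomposition scale Gr n br alpha Hp Hm \<longleftrightarrow>
     graded_subalgebra scale Gr n br alpha Hp \<and> graded_subalgebra scale Gr n br alpha Hm \<and>
     Hp \<noteq> {0} \<and> Hm \<noteq> {0} \<and>
     (\<forall>v. \<exists>!p. fst p \<in> Hp \<and> snd p \<in> Hm \<and> v = fst p + snd p)"

end

theory Submission
  imports Defs
begin

text \<open>
  A product structure is a degree-zero linear involution P, so g is the direct sum of its
  eigenspaces g_+ and g_- (the projections are (x + P x)/2 and (x - P x)/2, which needs
  characteristic zero); conversely a decomposition g = g_+ + g_- defines the involution that is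
  id on g_+ and -id on g_-.  Under this correspondence P has degree zero iff g_+ and g_- are
  graded, P commutes with alpha iff alpha preserves g_+ and g_-, and P is not +-id iff both are
  nonzero.  It remains to see that the Nijenhuis identity for P holds iff g_+ and g_- are closed
  under the bracket.

  Both sides of the identity are additive in each argument, so it suffices to test it on
  eigenvectors x_1, ..., x_n with P x_k = -x_k exactly for k in R.  Applying P at the positions
  in S multiplies the bracket b = [x_1, ..., x_n] by (-1)^|S \<inter> R|, so each deformed bracket
  is a combination of the eigencomponents b_+ and b_- of b, and the Nijenhuis defect
  [P x_1, ..., P x_n] - P [x_1, ..., x_n]^(n-1) equals
  (\<Sum>S. (-1)^(n - |S| + |S \<inter> R|)) b_+ + (\<Sum>S. (-1)^|S \<inter> R|) b_-,
  with S ranging over the subsets of the n positions.  The first sum vanishes unless R contains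
  every position and the second unless R is empty, so the identity says exactly that b lies in
  g_+ when all x_k do and in g_- when all x_k do.
\<close>

lemma length_apply_at [simp]: "length (apply_at N S xs) = length xs"
  by (simp add: apply_at_def)

lemma nth_apply_at [simp]:
  "i < length xs \<Longrightarrow> apply_at N S xs ! i = (if i \<in> S then N (xs ! i) else xs ! i)"
  by (simp add: apply_at_def)

lemma apply_at_all_positions: "apply_at N {0..<length xs} xs = map N xs"
  by (rule nth_equalityI) auto

lemma apply_at_insert:
  "t < length xs \<Longrightarrow> t \<notin> S \<Longrightarrow>
    apply_at N (insert t S) xs = (apply_at N S xs)[t := N (apply_at N S xs ! t)]"
  by (rule nth_equalityI) (auto simp: nth_list_update)

lemma apply_at_list_update:
  "i < length xs \<Longrightarrow> apply_at N S (xs[i := a]) = (apply_at N S xs)[i := (if i \<in> S then N a else a)]"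
  by (rule nth_equalityI) (auto simp: nth_list_update)

lemma multilinear_add:
  "multilinear scale n br \<Longrightarrow> length xs = n \<Longrightarrow> i < n \<Longrightarrow>
    br (xs[i := a + b]) = br (xs[i := a]) + br (xs[i := b])"
  unfolding multilinear_def by blast

lemma multilinear_scale:
  "multilinear scale n br \<Longrightarrow> length xs = n \<Longrightarrow> i < n \<Longrightarrow>
    br (xs[i := scale c a]) = scale c (br (xs[i := a]))"
  unfolding multilinear_def by blast

lemma multilinear_apply_at_scale:
  assumes "vector_space scale" and ml: "multilinear scale n br"
    and len: "length xs = n" and "S \<subseteq> {0..<n}"
  shows "br (apply_at (scale c) S xs) = scale (c ^ card S) (br xs)"
proof -
  interpret vector_space scale by fact
  have "finite S" using \<open>S \<subseteq> {0..<n}\<close> finite_subset by blast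
  then show ?thesis using \<open>S \<subseteq> {0..<n}\<close>
  proof (induction S rule: finite_induct)
    case empty
    have "apply_at (scale c) {} xs = xs" by (rule nth_equalityI) auto
    then show ?case by simp
  next
    case (insert t S)
    let ?ys = "apply_at (scale c) S xs"
    have t: "t < n" using insert.prems by auto
    have "br (apply_at (scale c) (insert t S) xs) = br (?ys[t := scale c (?ys ! t)])"
      using apply_at_insert[of t xs S] t len insert.hyps by simp
    also have "\<dots> = scale c (br (?ys[t := ?ys ! t]))"
      using multilinear_scale[OF ml] len t by simp
    also have "\<dots> = scale c (br ?ys)" by simp
    finally show ?case using insert by simp
  qed
qed

lemma sum_Pow_eq_0_if_insert_negates:
  fixes f :: "'a set \<Rightarrow> 'b::ab_group_add"
  assumes "finite X" "r \<in> X" "\<And>S. S \<subseteq> X - {r} \<Longrightarrow> f (insert r S) = - f S"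
  shows "(\<Sum>S\<in>Pow X. f S) = 0"
proof -
  define A where "A = X - {r}"
  have X: "X = insert r A" "r \<notin> A" "finite A" using assms A_def by auto
  have "Pow X = Pow A \<union> insert r ` Pow A" "Pow A \<inter> insert r ` Pow A = {}"
    using X by (auto simp: Pow_insert)
  moreover have "inj_on (insert r) (Pow A)"
    using X by (intro inj_onI) (metis PowD Diff_insert_absorb subsetD)
  ultimately have "(\<Sum>S\<in>Pow X. f S) = (\<Sum>S\<in>Pow A. f S) + (\<Sum>S\<in>Pow A. f (insert r S))"
    using X by (simp add: sum.union_disjoint sum.reindex)
  also have "(\<Sum>S\<in>Pow A. f (insert r S)) = (\<Sum>S\<in>Pow A. - f S)"
    using assms(3) A_def by (intro sum.cong) auto
  finally show ?thesis by (simp add: sum_negf)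
qed

definition subset_sign :: "nat set \<Rightarrow> nat set \<Rightarrow> 'a::comm_ring_1" where
  "subset_sign R S = (-1) ^ card (S \<inter> R)"

definition sign_sum :: "nat \<Rightarrow> nat set \<Rightarrow> nat \<Rightarrow> 'a::comm_ring_1" where
  "sign_sum n R j = (\<Sum>S | S \<subseteq> {0..<n} \<and> card S = j. subset_sign R S)"

definition sign_sum_upto :: "nat \<Rightarrow> nat set \<Rightarrow> nat \<Rightarrow> 'a::comm_ring_1" where
  "sign_sum_upto n R j = (\<Sum>S | S \<subseteq> {0..<n} \<and> card S \<le> j. subset_sign R S)"

definition alt_sign_sum_upto :: "nat \<Rightarrow> nat set \<Rightarrow> nat \<Rightarrow> 'a::comm_ring_1" where
  "alt_sign_sum_upto n R j =
     (\<Sum>S | S \<subseteq> {0..<n} \<and> card S \<le> j. (-1) ^ (j - card S) * subset_sign R S)"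

lemma finite_subsets_atLeastLessThan: "finite {S. S \<subseteq> {0..<(n::nat)} \<and> P S}"
  by (rule finite_subset[of _ "Pow {0..<n}"]) auto

lemma subsets_card_le_Suc:
  "{S. S \<subseteq> {0..<n} \<and> card S \<le> Suc j} =
     {S. S \<subseteq> {0..<n} \<and> card S = Suc j} \<union> {S. S \<subseteq> {0..<n} \<and> card S \<le> j}"
  by (auto simp: le_Suc_eq)

lemma subsets_card_le_0: "{S. S \<subseteq> {0..<n::nat} \<and> card S \<le> 0} = {{}}"
proof (intro set_eqI iffI)
  fix S assume "S \<in> {S. S \<subseteq> {0..<n} \<and> card S \<le> 0}"
  then show "S \<in> {{}}" using finite_subset[OF _ finite_atLeastLessThan] by auto
qed auto

lemma subsets_card_le_top: "{S. S \<subseteq> {0..<n} \<and> card S \<le> n} = Pow {0..<n}"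
proof -
  have "card S \<le> n" if "S \<subseteq> {0..<n}" for S
    using card_mono[OF finite_atLeastLessThan that] by simp
  then show ?thesis by auto
qed

lemma sign_sum_upto_0: "sign_sum_upto n R 0 = 1"
  unfolding sign_sum_upto_def subsets_card_le_0 by (simp add: subset_sign_def)

lemma alt_sign_sum_upto_0: "alt_sign_sum_upto n R 0 = 1"
  unfolding alt_sign_sum_upto_def subsets_card_le_0 by (simp add: subset_sign_def)

lemma sign_sum_upto_Suc: "sign_sum_upto n R (Suc j) = sign_sum n R (Suc j) + sign_sum_upto n R j"
  unfolding sign_sum_upto_def sign_sum_def subsets_card_le_Suc
  by (subst sum.union_disjoint) (auto simp: finite_subsets_atLeastLessThan)

lemma alt_sign_sum_upto_Suc:
  "alt_sign_sum_upto n R (Suc j) = sign_sum n R (Suc j) - alt_sign_sum_upto n R j"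
proof -
  let ?f = "\<lambda>j S. (-1) ^ (j - card S) * subset_sign R S"
  have "alt_sign_sum_upto n R (Suc j) =
      (\<Sum>S | S \<subseteq> {0..<n} \<and> card S = Suc j. ?f (Suc j) S) +
      (\<Sum>S | S \<subseteq> {0..<n} \<and> card S \<le> j. ?f (Suc j) S)"
    unfolding alt_sign_sum_upto_def subsets_card_le_Suc
    by (subst sum.union_disjoint) (auto simp: finite_subsets_atLeastLessThan)
  also have "(\<Sum>S | S \<subseteq> {0..<n} \<and> card S = Suc j. ?f (Suc j) S) = sign_sum n R (Suc j)"
    unfolding sign_sum_def by (intro sum.cong) auto
  also have "(\<Sum>S | S \<subseteq> {0..<n} \<and> card S \<le> j. ?f (Suc j) S) =
      (\<Sum>S | S \<subseteq> {0..<n} \<and> card S \<le> j. - ?f j S)"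
    by (intro sum.cong) (auto simp: Suc_diff_le)
  finally show ?thesis unfolding alt_sign_sum_upto_def by (simp add: sum_negf)
qed

lemma sign_sum_top: "sign_sum n R n = subset_sign R {0..<n}"
proof -
  have "{S. S \<subseteq> {0..<n} \<and> card S = n} = {{0..<n}}"
  proof (intro set_eqI iffI)
    fix S assume "S \<in> {S. S \<subseteq> {0..<n} \<and> card S = n}"
    then show "S \<in> {{0..<n}}" using card_subset_eq[OF finite_atLeastLessThan, of S 0 n] by simp
  qed simp
  then show ?thesis unfolding sign_sum_def by simp
qed

lemma sign_sum_upto_top:
  assumes "R \<subseteq> {0..<n}"
  shows "sign_sum_upto n R n = (if R = {} then 2 ^ n else 0)"
proof (cases "R = {}")
  case True
  then show ?thesis
    by (simp add: sign_sum_upto_def subsets_card_le_top subset_sign_def card_Pow)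
next
  case False
  then obtain r where r: "r \<in> R" by blast
  have "(\<Sum>S\<in>Pow {0..<n}. subset_sign R S) = (0::'a)"
  proof (rule sum_Pow_eq_0_if_insert_negates)
    fix S assume "S \<subseteq> {0..<n} - {r}"
    then have "insert r S \<inter> R = insert r (S \<inter> R)" "finite (S \<inter> R)" "r \<notin> S \<inter> R"
      using r by (auto dest: finite_subset)
    then show "subset_sign R (insert r S) = - subset_sign R S"
      by (simp add: subset_sign_def)
  qed (use assms r in auto)
  then show ?thesis using False by (simp add: sign_sum_upto_def subsets_card_le_top)
qed

lemma alt_sign_sum_upto_top:
  assumes "R \<subseteq> {0..<n}"
  shows "alt_sign_sum_upto n R n = (if R = {0..<n} then (-1) ^ n * 2 ^ n else 0)"
proof (cases "R = {0..<n}")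
  case True
  have "alt_sign_sum_upto n R n = (\<Sum>S\<in>Pow {0..<n}. ((-1) ^ n :: 'a))"
    unfolding alt_sign_sum_upto_def subsets_card_le_top subset_sign_def
  proof (intro sum.cong refl)
    fix S assume "S \<in> Pow {0..<n}"
    then have "S \<inter> R = S" "card S \<le> n" using True card_mono[of "{0..<n}" S] by auto
    then show "(-1) ^ (n - card S) * (-1) ^ card (S \<inter> R) = ((-1) ^ n :: 'a)"
      by (simp add: power_add[symmetric])
  qed
  then show ?thesis using True by (simp add: card_Pow)
next
  case False
  then have "\<not> {0..<n} \<subseteq> R" using assms by blast
  then obtain q where q: "q < n" "q \<notin> R" by (meson atLeastLessThan_iff subsetI zero_le)
  have "(\<Sum>S\<in>Pow {0..<n}. (-1) ^ (n - card S) * subset_sign R S) = (0::'a)"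
  proof (rule sum_Pow_eq_0_if_insert_negates)
    fix S assume S: "S \<subseteq> {0..<n} - {q}"
    then have "finite S" "q \<notin> S" "insert q S \<inter> R = S \<inter> R" using q by (auto dest: finite_subset)
    moreover have "card S < n"
      using card_mono[OF _ S] q by simp
    ultimately show "(-1) ^ (n - card (insert q S)) * subset_sign R (insert q S) =
        - ((-1) ^ (n - card S) * subset_sign R S :: 'a)"
      by (simp add: subset_sign_def Suc_diff_Suc[symmetric])
  qed (use q in auto)
  then show ?thesis using False by (simp add: alt_sign_sum_upto_def subsets_card_le_top)
qed

lemma multilinear_apply_at_signed:
  fixes scale :: "'k::field \<Rightarrow> 'v::ab_group_add \<Rightarrow> 'v"
  assumes vs: "vector_space scale" and ml: "multilinear scale n br" and len: "length xs = n"
    and R: "R \<subseteq> {0..<n}" and S: "S \<subseteq> {0..<n}"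
    and signs: "\<And>k. k < n \<Longrightarrow> P (xs ! k) = (if k \<in> R then - xs ! k else xs ! k)"
  shows "br (apply_at P S xs) = scale (subset_sign R S) (br xs)"
proof -
  interpret vector_space scale by fact
  have "apply_at P S xs = apply_at (scale (-1)) (S \<inter> R) xs"
    using len signs by (intro nth_equalityI) auto
  then show ?thesis
    using multilinear_apply_at_scale[OF vs ml len, of "S \<inter> R" "-1"] S
    by (auto simp: subset_sign_def)
qed

lemma bracketN_signed:
  fixes scale :: "'k::field \<Rightarrow> 'v::ab_group_add \<Rightarrow> 'v"
  assumes lin: "Vector_Spaces.linear scale scale P" and ml: "multilinear scale n br"
    and len: "length xs = n" and R: "R \<subseteq> {0..<n}"
    and signs: "\<And>k. k < n \<Longrightarrow> P (xs ! k) = (if k \<in> R then - xs ! k else xs ! k)"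
    and b: "br xs = u + w" and Pu: "P u = u" and Pw: "P w = - w"
  shows "bracketN br P j xs = scale (alt_sign_sum_upto n R j) u + scale (sign_sum_upto n R j) w"
proof -
  interpret Vector_Spaces.linear scale scale P by fact
  show ?thesis
  proof (induction j)
    case 0
    then show ?case using b by (simp add: alt_sign_sum_upto_0 sign_sum_upto_0)
  next
    case (Suc j)
    have "(\<Sum>S | S \<subseteq> {0..<length xs} \<and> card S = Suc j. br (apply_at P S xs)) =
        (\<Sum>S | S \<subseteq> {0..<n} \<and> card S = Suc j. scale (subset_sign R S) (br xs))"
      using multilinear_apply_at_signed[OF vs1.vector_space_axioms ml len R _ signs] len
      by (intro sum.cong) auto
    also have "\<dots> = scale (sign_sum n R (Suc j)) u + scale (sign_sum n R (Suc j)) w"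
      by (simp add: sign_sum_def b vs1.scale_sum_left vs1.scale_right_distrib sum.distrib)
    finally show ?case
      using Suc Pu Pw
      by (simp add: alt_sign_sum_upto_Suc sign_sum_upto_Suc add scale neg algebra_simps)
  qed
qed

lemma nijenhuis_defect_signed:
  fixes scale :: "'k::field \<Rightarrow> 'v::ab_group_add \<Rightarrow> 'v"
  assumes lin: "Vector_Spaces.linear scale scale P" and ml: "multilinear scale n br"
    and n: "1 \<le> n" and len: "length xs = n" and R: "R \<subseteq> {0..<n}"
    and signs: "\<And>k. k < n \<Longrightarrow> P (xs ! k) = (if k \<in> R then - xs ! k else xs ! k)"
    and b: "br xs = u + w" and Pu: "P u = u" and Pw: "P w = - w"
  shows "br (map P xs) - P (bracketN br P (n - 1) xs) =
    scale (alt_sign_sum_upto n R n) u + scale (sign_sum_upto n R n) w"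
proof -
  interpret Vector_Spaces.linear scale scale P by fact
  obtain m where m: "n = Suc m" using n by (cases n) auto
  have lhs: "br (map P xs) = scale (sign_sum n R n) (u + w)"
    using multilinear_apply_at_signed[OF vs1.vector_space_axioms ml len R _ signs, of "{0..<n}"]
      apply_at_all_positions[of P xs] len b by (simp add: sign_sum_top)
  have rhs: "P (bracketN br P (n - 1) xs) =
      scale (alt_sign_sum_upto n R (n - 1)) u - scale (sign_sum_upto n R (n - 1)) w"
    using bracketN_signed[OF lin ml len R signs b Pu Pw] Pu Pw by (simp add: add scale neg)
  have coeffs: "alt_sign_sum_upto n R n = sign_sum n R n - alt_sign_sum_upto n R (n - 1)"
    "sign_sum_upto n R n = sign_sum n R n + sign_sum_upto n R (n - 1)"
    using alt_sign_sum_upto_Suc[of n R m] sign_sum_upto_Suc[of n R m] by (simp_all add: m)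
  show ?thesis unfolding lhs rhs coeffs by (simp add: algebra_simps)
qed

definition hcomp :: "('g \<Rightarrow> 'v::ab_group_add set) \<Rightarrow> 'v \<Rightarrow> 'g \<Rightarrow> 'v" where
  "hcomp Gr v = (THE c. finite {\<gamma>. c \<gamma> \<noteq> 0} \<and> (\<forall>\<gamma>. c \<gamma> \<in> Gr \<gamma>) \<and> v = sum c {\<gamma>. c \<gamma> \<noteq> 0})"

context
  fixes scale :: "'k::field \<Rightarrow> 'v::ab_group_add \<Rightarrow> 'v" and Gr :: "'g \<Rightarrow> 'v set"
  assumes graded: "graded_space scale Gr"
begin

interpretation vector_space scale
  using graded by (simp add: graded_space_def)

lemma subspace_grade: "subspace (Gr \<gamma>)"
  using graded by (simp add: graded_space_def)

lemma
  shows finite_hcomp_support: "finite {\<gamma>. hcomp Gr v \<gamma> \<noteq> 0}"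
    and hcomp_in_grade: "hcomp Gr v \<gamma> \<in> Gr \<gamma>"
    and sum_hcomp_support: "sum (hcomp Gr v) {\<gamma>. hcomp Gr v \<gamma> \<noteq> 0} = v"
proof -
  have "\<exists>!c. finite {\<gamma>. c \<gamma> \<noteq> 0} \<and> (\<forall>\<gamma>. c \<gamma> \<in> Gr \<gamma>) \<and> v = sum c {\<gamma>. c \<gamma> \<noteq> 0}"
    using graded by (simp add: graded_space_def)
  then have "finite {\<gamma>. hcomp Gr v \<gamma> \<noteq> 0} \<and> (\<forall>\<gamma>. hcomp Gr v \<gamma> \<in> Gr \<gamma>)
      \<and> v = sum (hcomp Gr v) {\<gamma>. hcomp Gr v \<gamma> \<noteq> 0}"
    unfolding hcomp_def by (rule theI')
  then show "finite {\<gamma>. hcomp Gr v \<gamma> \<noteq> 0}" "hcomp Gr v \<gamma> \<in> Gr \<gamma>"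
    "sum (hcomp Gr v) {\<gamma>. hcomp Gr v \<gamma> \<noteq> 0} = v" by auto
qed

lemma sum_hcomp:
  assumes "finite T" "{\<gamma>. hcomp Gr v \<gamma> \<noteq> 0} \<subseteq> T"
  shows "sum (hcomp Gr v) T = v"
proof -
  have "sum (hcomp Gr v) T = sum (hcomp Gr v) {\<gamma>. hcomp Gr v \<gamma> \<noteq> 0}"
    using assms by (intro sum.mono_neutral_right) auto
  then show ?thesis using sum_hcomp_support by simp
qed

lemma hcomp_unique:
  assumes "finite T" "\<And>\<gamma>. d \<gamma> \<in> Gr \<gamma>" "\<And>\<gamma>. \<gamma> \<notin> T \<Longrightarrow> d \<gamma> = 0" "v = sum d T"
  shows "hcomp Gr v = d"
proof -
  have ex1: "\<exists>!c. finite {\<gamma>. c \<gamma> \<noteq> 0} \<and> (\<forall>\<gamma>. c \<gamma> \<in> Gr \<gamma>) \<and> v = sum c {\<gamma>. c \<gamma> \<noteq> 0}"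
    using graded by (simp add: graded_space_def)
  have supp: "{\<gamma>. d \<gamma> \<noteq> 0} \<subseteq> T" using assms(3) by blast
  then have "sum d T = sum d {\<gamma>. d \<gamma> \<noteq> 0}"
    using assms(1) by (intro sum.mono_neutral_right) auto
  then have "finite {\<gamma>. d \<gamma> \<noteq> 0} \<and> (\<forall>\<gamma>. d \<gamma> \<in> Gr \<gamma>) \<and> v = sum d {\<gamma>. d \<gamma> \<noteq> 0}"
    using finite_subset[OF supp assms(1)] assms(2,4) by auto
  then show ?thesis unfolding hcomp_def by (rule the1_equality[OF ex1])
qed

lemma hcomp_homogeneous: "x \<in> Gr \<gamma> \<Longrightarrow> hcomp Gr x = (\<lambda>\<delta>. if \<delta> = \<gamma> then x else 0)"
  by (rule hcomp_unique[of "{\<gamma>}"]) (auto intro: subspace_0[OF subspace_grade])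

lemma hcomp_add: "hcomp Gr (x + y) = (\<lambda>\<gamma>. hcomp Gr x \<gamma> + hcomp Gr y \<gamma>)"
proof (rule hcomp_unique)
  let ?T = "{\<gamma>. hcomp Gr x \<gamma> \<noteq> 0} \<union> {\<gamma>. hcomp Gr y \<gamma> \<noteq> 0}"
  show "finite ?T" using finite_hcomp_support by blast
  show "hcomp Gr x \<gamma> + hcomp Gr y \<gamma> \<in> Gr \<gamma>" for \<gamma>
    using hcomp_in_grade subspace_add[OF subspace_grade] by blast
  show "\<gamma> \<notin> ?T \<Longrightarrow> hcomp Gr x \<gamma> + hcomp Gr y \<gamma> = 0" for \<gamma> by simp
  show "x + y = (\<Sum>\<gamma>\<in>?T. hcomp Gr x \<gamma> + hcomp Gr y \<gamma>)"
    using finite_hcomp_support by (simp add: sum.distrib sum_hcomp)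
qed

lemma hcomp_map:
  assumes add: "\<And>x y. L (x + y) = L x + L y" and grade: "\<And>\<gamma> x. x \<in> Gr \<gamma> \<Longrightarrow> L x \<in> Gr \<gamma>"
  shows "hcomp Gr (L x) = (\<lambda>\<gamma>. L (hcomp Gr x \<gamma>))"
proof -
  interpret additive L by unfold_locales (rule add)
  let ?T = "{\<gamma>. hcomp Gr x \<gamma> \<noteq> 0}"
  show ?thesis
  proof (rule hcomp_unique)
    show "finite ?T" by (rule finite_hcomp_support)
    show "L (hcomp Gr x \<gamma>) \<in> Gr \<gamma>" for \<gamma> using hcomp_in_grade grade by blast
    show "\<gamma> \<notin> ?T \<Longrightarrow> L (hcomp Gr x \<gamma>) = 0" for \<gamma> by (simp add: zero)
    show "L x = (\<Sum>\<gamma>\<in>?T. L (hcomp Gr x \<gamma>))" using sum_hcomp_support sum by metis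
  qed
qed

lemma graded_subspace_iff_hcomp_closed:
  assumes "subspace H"
  shows "H = span (\<Union>\<gamma>. H \<inter> Gr \<gamma>) \<longleftrightarrow> (\<forall>x\<in>H. \<forall>\<gamma>. hcomp Gr x \<gamma> \<in> H)"
proof
  assume H: "H = span (\<Union>\<gamma>. H \<inter> Gr \<gamma>)"
  show "\<forall>x\<in>H. \<forall>\<gamma>. hcomp Gr x \<gamma> \<in> H"
  proof (intro ballI allI)
    fix x \<gamma> assume "x \<in> H"
    then have "x \<in> span (\<Union>\<gamma>. H \<inter> Gr \<gamma>)" using H by blast
    then show "hcomp Gr x \<gamma> \<in> H"
    proof (induction rule: span_induct)
      case base
      show ?case
      proof (rule subspaceI)
        show "0 \<in> {x. hcomp Gr x \<gamma> \<in> H}"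
          using hcomp_homogeneous[OF subspace_0[OF subspace_grade]] subspace_0[OF assms]
          by simp
        show "x + y \<in> {x. hcomp Gr x \<gamma> \<in> H}"
          if "x \<in> {x. hcomp Gr x \<gamma> \<in> H}" "y \<in> {x. hcomp Gr x \<gamma> \<in> H}" for x y
          using that hcomp_add subspace_add[OF assms] by simp
        show "scale c x \<in> {x. hcomp Gr x \<gamma> \<in> H}" if "x \<in> {x. hcomp Gr x \<gamma> \<in> H}" for c x
          using that hcomp_map[of "scale c"] subspace_scale[OF subspace_grade]
            subspace_scale[OF assms] by (simp add: scale_right_distrib)
      qed
    next
      case (step y)
      then obtain \<delta> where "y \<in> H" "y \<in> Gr \<delta>" by blast
      then show ?case using hcomp_homogeneous[of y \<delta>] subspace_0[OF assms] by simp
    qed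
  qed
next
  assume closed: "\<forall>x\<in>H. \<forall>\<gamma>. hcomp Gr x \<gamma> \<in> H"
  show "H = span (\<Union>\<gamma>. H \<inter> Gr \<gamma>)"
  proof
    show "H \<subseteq> span (\<Union>\<gamma>. H \<inter> Gr \<gamma>)"
    proof
      fix x assume "x \<in> H"
      then have "hcomp Gr x \<gamma> \<in> span (\<Union>\<gamma>. H \<inter> Gr \<gamma>)" for \<gamma>
        using closed hcomp_in_grade[of x \<gamma>] by (intro span_base) blast
      then have "sum (hcomp Gr x) {\<gamma>. hcomp Gr x \<gamma> \<noteq> 0} \<in> span (\<Union>\<gamma>. H \<inter> Gr \<gamma>)"
        by (rule span_sum)
      then show "x \<in> span (\<Union>\<gamma>. H \<inter> Gr \<gamma>)" using sum_hcomp_support by simp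
    qed
    show "span (\<Union>\<gamma>. H \<inter> Gr \<gamma>) \<subseteq> H" by (rule span_minimal[OF _ assms]) blast
  qed
qed

end

lemma bracketN_list_update_add:
  assumes ml: "multilinear scale n br" and len: "length xs = n" and i: "i < n"
    and N_add: "\<And>x y. N (x + y) = N x + N y"
  shows "bracketN br N j (xs[i := a + b]) = bracketN br N j (xs[i := a]) + bracketN br N j (xs[i := b])"
proof (induction j)
  case 0
  then show ?case using multilinear_add[OF ml len i] by simp
next
  case (Suc j)
  have "br (apply_at N S (xs[i := a + b])) =
      br (apply_at N S (xs[i := a])) + br (apply_at N S (xs[i := b]))" for S
    using multilinear_add[OF ml, of "apply_at N S xs" i] apply_at_list_update[of i xs N S] len i
    by (simp add: N_add)
  then show ?case using Suc N_add by (simp add: sum.distrib algebra_simps)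
qed

lemma multiadditive_eq_0_if_eq_0_on_summands:
  fixes \<Phi> :: "'v::ab_group_add list \<Rightarrow> 'w::monoid_add"
  assumes add: "\<And>xs i a b. length xs = n \<Longrightarrow> i < n \<Longrightarrow>
      \<Phi> (xs[i := a + b]) = \<Phi> (xs[i := a]) + \<Phi> (xs[i := b])"
    and split: "\<And>v. \<exists>a b. a \<in> G \<and> b \<in> G \<and> v = a + b"
    and gen: "\<And>xs. length xs = n \<Longrightarrow> set xs \<subseteq> G \<Longrightarrow> \<Phi> xs = 0"
    and len: "length xs = n"
  shows "\<Phi> xs = 0"
proof -
  have "\<Phi> xs = 0" if "length xs = n" "\<forall>k. m \<le> k \<longrightarrow> k < n \<longrightarrow> xs ! k \<in> G" for m xs
    using that
  proof (induction m arbitrary: xs)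
    case 0
    then have "set xs \<subseteq> G" by (auto simp: in_set_conv_nth)
    then show ?case using gen 0 by blast
  next
    case (Suc m)
    show ?case
    proof (cases "m < n")
      case False
      then show ?thesis using Suc by auto
    next
      case True
      obtain a b where ab: "a \<in> G" "b \<in> G" "xs ! m = a + b" using split by blast
      have "\<Phi> (xs[m := a]) = 0" "\<Phi> (xs[m := b]) = 0"
        using Suc ab by (auto intro!: Suc.IH simp: nth_list_update le_Suc_eq)
      moreover have "xs[m := a + b] = xs" using list_update_id[of xs m] ab(3) by simp
      ultimately show ?thesis using add[of xs m a b] Suc.prems(1) True by simp
    qed
  qed
  from this[of xs n] show ?thesis using len by simp
qed

locale linear_involution = Vector_Spaces.linear scale scale P
  for scale :: "'k::field_char_0 \<Rightarrow> 'v::ab_group_add \<Rightarrow> 'v" and P :: "'v \<Rightarrow> 'v" +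
  assumes involutive: "P (P x) = x"
begin

abbreviation plus_space :: "'v set" where "plus_space \<equiv> {x. P x = x}"

abbreviation minus_space :: "'v set" where "minus_space \<equiv> {x. P x = - x}"

definition plus_part :: "'v \<Rightarrow> 'v" where "plus_part v = scale (1/2) (v + P v)"

definition minus_part :: "'v \<Rightarrow> 'v" where "minus_part v = scale (1/2) (v - P v)"

lemma half_add_self: "scale (1/2) (x + x) = x"
proof -
  have "scale (1/2) (x + x) = scale (1/2 + 1/2) x"
    by (simp only: vs1.scale_right_distrib vs1.scale_left_distrib)
  then show ?thesis by simp
qed

lemma plus_part_in_plus_space: "plus_part v \<in> plus_space"
  by (simp add: plus_part_def scale add involutive add.commute)

lemma minus_part_in_minus_space: "minus_part v \<in> minus_space"
  by (simp add: minus_part_def scale diff involutive flip: vs1.scale_minus_right)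

lemma plus_part_add_minus_part: "plus_part v + minus_part v = v"
  using half_add_self[of v]
  by (simp add: plus_part_def minus_part_def flip: vs1.scale_right_distrib)

lemma plus_minus_parts_of_sum:
  assumes "a \<in> plus_space" "c \<in> minus_space"
  shows "plus_part (a + c) = a" "minus_part (a + c) = c"
proof -
  have "plus_part (a + c) = scale (1/2) (a + a)" "minus_part (a + c) = scale (1/2) (c + c)"
    using assms by (simp_all add: plus_part_def minus_part_def add algebra_simps)
  then show "plus_part (a + c) = a" "minus_part (a + c) = c"
    by (simp_all add: half_add_self)
qed

lemma linear: "Vector_Spaces.linear scale scale P"
  by unfold_locales

lemma neg_eq_self_iff: "- x = x \<longleftrightarrow> x = (0::'v)"
proof
  assume "- x = x"
  then have "x + x = 0" by (metis add.right_inverse)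
  then show "x = 0" using half_add_self[of x] by simp
qed simp

lemma plus_part_eq_0_iff: "plus_part v = 0 \<longleftrightarrow> v \<in> minus_space"
  by (simp add: plus_part_def add_eq_0_iff)

lemma minus_part_eq_0_iff: "minus_part v = 0 \<longleftrightarrow> v \<in> plus_space"
  by (auto simp: minus_part_def)

lemma subspace_plus_space: "vs1.subspace plus_space"
  by (rule vs1.subspaceI) (auto simp: add scale)

lemma subspace_minus_space: "vs1.subspace minus_space"
  by (rule vs1.subspaceI) (auto simp: add scale)

lemma plus_space_eq_0_iff: "plus_space = {0} \<longleftrightarrow> P = uminus"
proof
  assume "plus_space = {0}"
  then have "plus_part v = 0" for v using plus_part_in_plus_space[of v] by blast
  then show "P = uminus" by (auto simp: fun_eq_iff plus_part_eq_0_iff)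
next
  assume "P = uminus"
  then show "plus_space = {0}" by (auto simp: neg_eq_self_iff)
qed

lemma minus_space_eq_0_iff: "minus_space = {0} \<longleftrightarrow> P = id"
proof
  assume "minus_space = {0}"
  then have "minus_part v = 0" for v using minus_part_in_minus_space[of v] by blast
  then show "P = id" by (auto simp: fun_eq_iff minus_part_eq_0_iff)
next
  assume "P = id"
  moreover have "x = - x \<longleftrightarrow> x = 0" for x :: 'v using neg_eq_self_iff[of x] by auto
  ultimately show "minus_space = {0}" by auto
qed

lemma ex1_plus_minus_decomposition:
  "\<exists>!p. fst p \<in> plus_space \<and> snd p \<in> minus_space \<and> v = fst p + snd p"
proof (rule ex1I[of _ "(plus_part v, minus_part v)"])
  show "fst (plus_part v, minus_part v) \<in> plus_space \<and> snd (plus_part v, minus_part v) \<in> minus_space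
      \<and> v = fst (plus_part v, minus_part v) + snd (plus_part v, minus_part v)"
    using plus_part_in_plus_space minus_part_in_minus_space plus_part_add_minus_part by simp
next
  fix p assume "fst p \<in> plus_space \<and> snd p \<in> minus_space \<and> v = fst p + snd p"
  then show "p = (plus_part v, minus_part v)" using plus_minus_parts_of_sum[of "fst p" "snd p"] by auto
qed

lemma plus_add_minus_eq_0_iff:
  assumes "a \<in> plus_space" "c \<in> minus_space"
  shows "a + c = 0 \<longleftrightarrow> a = 0 \<and> c = 0"
  using plus_minus_parts_of_sum[OF assms] by (auto simp: plus_part_def minus_part_def)

lemma nijenhuis_identity_signed_iff:
  assumes ml: "multilinear scale n br" and n: "1 \<le> n" and len: "length xs = n"
    and R: "R \<subseteq> {0..<n}"
    and signs: "\<And>k. k < n \<Longrightarrow> P (xs ! k) = (if k \<in> R then - xs ! k else xs ! k)"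
  shows "br (map P xs) = P (bracketN br P (n - 1) xs) \<longleftrightarrow>
    (R = {} \<longrightarrow> br xs \<in> plus_space) \<and> (R = {0..<n} \<longrightarrow> br xs \<in> minus_space)"
proof -
  let ?u = "plus_part (br xs)" and ?w = "minus_part (br xs)"
  let ?a = "alt_sign_sum_upto n R n :: 'k" and ?b = "sign_sum_upto n R n :: 'k"
  have defect: "br (map P xs) - P (bracketN br P (n - 1) xs) = scale ?a ?u + scale ?b ?w"
    using plus_part_in_plus_space minus_part_in_minus_space
    by (intro nijenhuis_defect_signed[OF linear ml n len R signs]) (simp_all add: plus_part_add_minus_part)
  have "br (map P xs) = P (bracketN br P (n - 1) xs) \<longleftrightarrow>
      br (map P xs) - P (bracketN br P (n - 1) xs) = 0" by simp
  also have "\<dots> \<longleftrightarrow> scale ?a ?u + scale ?b ?w = 0" unfolding defect ..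
  also have "\<dots> \<longleftrightarrow> scale ?a ?u = 0 \<and> scale ?b ?w = 0"
    using plus_part_in_plus_space minus_part_in_minus_space
    by (intro plus_add_minus_eq_0_iff) (simp_all add: scale)
  also have "\<dots> \<longleftrightarrow> (?a = 0 \<or> br xs \<in> minus_space) \<and> (?b = 0 \<or> br xs \<in> plus_space)"
    by (simp add: plus_part_eq_0_iff minus_part_eq_0_iff)
  finally show ?thesis
    using alt_sign_sum_upto_top[OF R, where 'a = 'k] sign_sum_upto_top[OF R, where 'a = 'k] by auto
qed

lemma brackets_closed_if_nijenhuis:
  assumes ml: "multilinear scale n br" and n: "1 \<le> n" and len: "length xs = n"
    and nijenhuis: "br (map P xs) = P (bracketN br P (n - 1) xs)"
  shows "set xs \<subseteq> plus_space \<Longrightarrow> br xs \<in> plus_space"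
    and "set xs \<subseteq> minus_space \<Longrightarrow> br xs \<in> minus_space"
proof -
  assume "set xs \<subseteq> plus_space"
  then have "P (xs ! k) = (if k \<in> {} then - xs ! k else xs ! k)" if "k < n" for k
    using that len nth_mem by fastforce
  from nijenhuis_identity_signed_iff[OF ml n len _ this] show "br xs \<in> plus_space"
    using nijenhuis by simp
next
  assume "set xs \<subseteq> minus_space"
  then have "P (xs ! k) = (if k \<in> {0..<n} then - xs ! k else xs ! k)" if "k < n" for k
    using that len nth_mem by fastforce
  from nijenhuis_identity_signed_iff[OF ml n len _ this] show "br xs \<in> minus_space"
    using nijenhuis n by auto
qed

lemma nijenhuis_if_brackets_closed:
  assumes ml: "multilinear scale n br" and n: "1 \<le> n" and len: "length xs = n"
    and plus_closed: "\<And>ys. length ys = n \<Longrightarrow> set ys \<subseteq> plus_space \<Longrightarrow> br ys \<in> plus_space"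
    and minus_closed: "\<And>ys. length ys = n \<Longrightarrow> set ys \<subseteq> minus_space \<Longrightarrow> br ys \<in> minus_space"
  shows "br (map P xs) = P (bracketN br P (n - 1) xs)"
proof -
  let ?G = "plus_space \<union> minus_space"
  define defect where "defect ys = br (map P ys) - P (bracketN br P (n - 1) ys)" for ys
  have "defect xs = 0"
  proof (rule multiadditive_eq_0_if_eq_0_on_summands[where \<Phi> = defect and G = ?G, OF _ _ _ len])
    fix ys :: "'v list" and i a b assume ys: "length ys = n" and i: "i < n"
    have "br (map P (ys[i := a + b])) = br (map P (ys[i := a])) + br (map P (ys[i := b]))"
      using multilinear_add[OF ml, of "map P ys" i] ys i by (simp add: map_update add)
    moreover have "bracketN br P (n - 1) (ys[i := a + b]) =
        bracketN br P (n - 1) (ys[i := a]) + bracketN br P (n - 1) (ys[i := b])"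
      by (rule bracketN_list_update_add[where N = P, OF ml ys i add])
    ultimately show "defect (ys[i := a + b]) = defect (ys[i := a]) + defect (ys[i := b])"
      by (simp add: defect_def add)
  next
    fix v
    show "\<exists>a b. a \<in> ?G \<and> b \<in> ?G \<and> v = a + b"
      using plus_part_add_minus_part[of v, symmetric] plus_part_in_plus_space[of v]
        minus_part_in_minus_space[of v] by blast
  next
    fix ys :: "'v list" assume ys: "length ys = n" "set ys \<subseteq> ?G"
    define R where "R = {k. k < n \<and> ys ! k \<notin> plus_space}"
    have R: "R \<subseteq> {0..<n}" by (auto simp: R_def)
    have "ys ! k \<in> ?G" if "k < n" for k using ys that nth_mem by blast
    then have signs: "P (ys ! k) = (if k \<in> R then - ys ! k else ys ! k)" if "k < n" for k
      using that by (auto simp: R_def)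
    have "set ys \<subseteq> plus_space" if "R = {}" using that ys signs by (auto simp: in_set_conv_nth)
    moreover have "set ys \<subseteq> minus_space" if "R = {0..<n}"
      using that ys signs by (auto simp: in_set_conv_nth)
    ultimately show "defect ys = 0"
      using nijenhuis_identity_signed_iff[OF ml n ys(1) R signs] plus_closed minus_closed ys(1)
      by (simp add: defect_def)
  qed
  then show ?thesis by (simp add: defect_def)
qed

lemma nijenhuis_iff_brackets_closed:
  assumes ml: "multilinear scale n br" and n: "1 \<le> n"
  shows "(\<forall>xs. length xs = n \<longrightarrow> br (map P xs) = P (bracketN br P (n - 1) xs)) \<longleftrightarrow>
    (\<forall>xs. length xs = n \<longrightarrow> set xs \<subseteq> plus_space \<longrightarrow> br xs \<in> plus_space) \<and>
    (\<forall>xs. length xs = n \<longrightarrow> set xs \<subseteq> minus_space \<longrightarrow> br xs \<in> minus_space)"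
  using brackets_closed_if_nijenhuis[OF ml n] nijenhuis_if_brackets_closed[OF ml n] by blast

lemma commute_iff_eigenspaces_invariant:
  assumes f_add: "\<And>x y. f (x + y) = f x + f y"
  shows "P \<circ> f = f \<circ> P \<longleftrightarrow> f ` plus_space \<subseteq> plus_space \<and> f ` minus_space \<subseteq> minus_space"
proof -
  interpret f: additive f by unfold_locales (rule f_add)
  show ?thesis
  proof
    assume "P \<circ> f = f \<circ> P"
    then have "P (f x) = f (P x)" for x by (metis comp_apply)
    then show "f ` plus_space \<subseteq> plus_space \<and> f ` minus_space \<subseteq> minus_space"
      by (auto simp: f.minus)
  next
    assume invariant: "f ` plus_space \<subseteq> plus_space \<and> f ` minus_space \<subseteq> minus_space"
    show "P \<circ> f = f \<circ> P"
    proof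
      fix v
      let ?u = "plus_part v" and ?w = "minus_part v"
      have "P (f ?u) = f ?u" "P (f ?w) = - f ?w"
        using invariant plus_part_in_plus_space[of v] minus_part_in_minus_space[of v] by blast+
      moreover have "P ?u = ?u" "P ?w = - ?w"
        using plus_part_in_plus_space[of v] minus_part_in_minus_space[of v] by simp_all
      ultimately have "P (f (?u + ?w)) = f (P (?u + ?w))"
        by (simp add: add f.add f.minus f.diff)
      then show "(P \<circ> f) v = (f \<circ> P) v" by (simp add: plus_part_add_minus_part)
    qed
  qed
qed

lemma degree_zero_iff_eigenspaces_graded:
  assumes graded: "graded_space scale Gr"
  shows "(\<forall>\<gamma>. \<forall>x\<in>Gr \<gamma>. P x \<in> Gr \<gamma>) \<longleftrightarrow>
    plus_space = vs1.span (\<Union>\<gamma>. plus_space \<inter> Gr \<gamma>) \<and>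
    minus_space = vs1.span (\<Union>\<gamma>. minus_space \<inter> Gr \<gamma>)"
  unfolding graded_subspace_iff_hcomp_closed[OF graded subspace_plus_space]
    graded_subspace_iff_hcomp_closed[OF graded subspace_minus_space]
proof safe
  fix x \<gamma> assume degree_zero: "\<forall>\<gamma>. \<forall>x\<in>Gr \<gamma>. P x \<in> Gr \<gamma>"
  have "hcomp Gr (P x) \<gamma> = P (hcomp Gr x \<gamma>)"
    using hcomp_map[where L = P, OF graded add] degree_zero by metis
  moreover have "hcomp Gr (- x) \<gamma> = - hcomp Gr x \<gamma>"
    using hcomp_map[where L = uminus, OF graded] vs1.subspace_neg[OF subspace_grade[OF graded]]
    by (metis minus_add_distrib)
  ultimately show "P x = x \<Longrightarrow> P (hcomp Gr x \<gamma>) = hcomp Gr x \<gamma>"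
    and "P x = - x \<Longrightarrow> P (hcomp Gr x \<gamma>) = - hcomp Gr x \<gamma>" by simp_all
next
  fix \<gamma> x
  assume plus_closed: "\<forall>x\<in>plus_space. \<forall>\<gamma>. hcomp Gr x \<gamma> \<in> plus_space"
    and minus_closed: "\<forall>x\<in>minus_space. \<forall>\<gamma>. hcomp Gr x \<gamma> \<in> minus_space"
    and x: "x \<in> Gr \<gamma>"
  let ?u = "hcomp Gr (plus_part x) \<gamma>" and ?w = "hcomp Gr (minus_part x) \<gamma>"
  have "x = hcomp Gr x \<gamma>" using hcomp_homogeneous[OF graded x] by simp
  also have "\<dots> = ?u + ?w"
    using hcomp_add[OF graded] plus_part_add_minus_part[of x] by metis
  finally have "P x = ?u - ?w"
    using plus_closed minus_closed plus_part_in_plus_space minus_part_in_minus_space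
    by (metis (mono_tags) add diff_conv_add_uminus mem_Collect_eq)
  moreover have "?u \<in> Gr \<gamma>" "?w \<in> Gr \<gamma>" using hcomp_in_grade[OF graded] by blast+
  ultimately show "P x \<in> Gr \<gamma>" by (simp add: vs1.subspace_diff[OF subspace_grade[OF graded]])
qed

lemma eigenspaces_eq_if_sums_cover:
  assumes sub: "Hp \<subseteq> plus_space" "Hm \<subseteq> minus_space"
    and cover: "\<And>v. \<exists>a\<in>Hp. \<exists>c\<in>Hm. v = a + c"
  shows "plus_space = Hp" "minus_space = Hm"
proof -
  have "x \<in> Hp" if "x \<in> plus_space" for x
  proof -
    obtain a c where ac: "a \<in> Hp" "c \<in> Hm" "x = a + c" using cover by blast
    then have "minus_part x = c" using sub plus_minus_parts_of_sum(2) by blast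
    moreover have "minus_part x = 0" using that minus_part_eq_0_iff by blast
    ultimately show ?thesis using ac by simp
  qed
  moreover have "x \<in> Hm" if "x \<in> minus_space" for x
  proof -
    obtain a c where ac: "a \<in> Hp" "c \<in> Hm" "x = a + c" using cover by blast
    then have "plus_part x = a" using sub plus_minus_parts_of_sum(1) by blast
    moreover have "plus_part x = 0" using that plus_part_eq_0_iff by blast
    ultimately show ?thesis using ac by simp
  qed
  ultimately show "plus_space = Hp" "minus_space = Hm" using sub by blast+
qed

lemma product_structure_iff_subalgebra_decomposition:
  assumes n: "1 \<le> n" and graded: "graded_space scale Gr" and ml: "multilinear scale n br"
    and alpha_add: "\<And>x y. alpha (x + y) = alpha x + alpha y"
  shows "product_structure scale Gr n br alpha P \<longleftrightarrow>
    subalgebra_decomposition scale Gr n br alpha plus_space minus_space"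
proof -
  have "product_structure scale Gr n br alpha P \<longleftrightarrow>
      (\<forall>\<gamma>. \<forall>x\<in>Gr \<gamma>. P x \<in> Gr \<gamma>) \<and> P \<noteq> id \<and> P \<noteq> uminus \<and> P \<circ> alpha = alpha \<circ> P \<and>
      (\<forall>xs. length xs = n \<longrightarrow> br (map P xs) = P (bracketN br P (n - 1) xs))"
    using linear involutive
    by (auto simp: product_structure_def almost_product_def nijenhuis_def deg0_linear_def fun_eq_iff)
  also have "\<dots> \<longleftrightarrow> subalgebra_decomposition scale Gr n br alpha plus_space minus_space"
    unfolding subalgebra_decomposition_def graded_subalgebra_def
      degree_zero_iff_eigenspaces_graded[OF graded] plus_space_eq_0_iff minus_space_eq_0_iff
      commute_iff_eigenspaces_invariant[where f = alpha, OF alpha_add]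
      nijenhuis_iff_brackets_closed[OF ml n]
    using subspace_plus_space subspace_minus_space ex1_plus_minus_decomposition by blast
  finally show ?thesis .
qed

end

lemma product_structure_linear_involution:
  "product_structure scale Gr n br alpha P \<Longrightarrow> linear_involution scale P"
  by (intro linear_involution.intro linear_involution_axioms.intro)
    (auto simp: product_structure_def almost_product_def deg0_linear_def fun_eq_iff)

lemma complementary_subspaces_reflection:
  fixes scale :: "'k::field_char_0 \<Rightarrow> 'v::ab_group_add \<Rightarrow> 'v"
  assumes "vector_space scale" and Hp: "module.subspace scale Hp" and Hm: "module.subspace scale Hm"
    and decomposition: "\<And>v. \<exists>!p. fst p \<in> Hp \<and> snd p \<in> Hm \<and> v = fst p + snd p"
  obtains P where "linear_involution scale P" "{x. P x = x} = Hp" "{x. P x = - x} = Hm"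
proof -
  interpret vector_space scale by fact
  obtain f where f: "\<And>v. fst (f v) \<in> Hp \<and> snd (f v) \<in> Hm \<and> v = fst (f v) + snd (f v)"
    using decomposition by metis
  define P where "P v = fst (f v) - snd (f v)" for v
  have P_sum: "P (a + c) = a - c" if "a \<in> Hp" "c \<in> Hm" for a c
    using decomposition[of "a + c"] f[of "a + c"] that by (metis P_def fst_conv snd_conv)
  have split: "\<exists>a\<in>Hp. \<exists>c\<in>Hm. v = a + c" for v using f by blast
  have P_add: "P (x + y) = P x + P y" for x y
  proof -
    obtain a c a' c' where x: "a \<in> Hp" "c \<in> Hm" "x = a + c" and y: "a' \<in> Hp" "c' \<in> Hm" "y = a' + c'"
      using split by meson
    have "P (x + y) = P ((a + a') + (c + c'))" using x y by (simp add: algebra_simps)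
    also have "\<dots> = (a + a') - (c + c')"
      using x y subspace_add[OF Hp] subspace_add[OF Hm] by (intro P_sum) auto
    also have "\<dots> = P x + P y" using x y P_sum by simp
    finally show ?thesis .
  qed
  have P_scale: "P (scale k x) = scale k (P x)" for k x
  proof -
    obtain a c where "a \<in> Hp" "c \<in> Hm" "x = a + c" using split by meson
    then show ?thesis using P_sum subspace_scale[OF Hp] subspace_scale[OF Hm]
      by (simp add: scale_right_distrib scale_right_diff_distrib)
  qed
  have P_P: "P (P x) = x" for x
  proof -
    obtain a c where "a \<in> Hp" "c \<in> Hm" "x = a + c" using split by meson
    then show ?thesis using P_sum subspace_neg[OF Hm] by (metis diff_conv_add_uminus minus_minus)
  qed
  interpret linear_involution scale P
    by unfold_locales (simp_all add: P_add P_scale P_P)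
  have "Hp \<subseteq> plus_space" "Hm \<subseteq> minus_space"
    using P_sum[of _ 0] P_sum[of 0] subspace_0[OF Hp] subspace_0[OF Hm] by auto
  from eigenspaces_eq_if_sums_cover[OF this split] show thesis
    by (rule that[OF linear_involution_axioms])
qed

theorem theorem6p8:
  fixes scale :: "'k::field_char_0 \<Rightarrow> 'v::ab_group_add \<Rightarrow> 'v"
    and Gr :: "'g::ab_group_add \<Rightarrow> 'v set"
    and n :: nat and br :: "'v list \<Rightarrow> 'v"
    and eps :: "'g \<Rightarrow> 'g \<Rightarrow> 'k" and alpha :: "'v \<Rightarrow> 'v"
  assumes "n_hom_lie_color scale Gr n br eps alpha"
  shows "((\<exists>P. product_structure scale Gr n br alpha P) \<longleftrightarrow>
            (\<exists>Hp Hm. subalgebra_decomposition scale Gr n br alpha Hp Hm))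
       \<and> (\<forall>P. product_structure scale Gr n br alpha P \<longrightarrow>
            subalgebra_decomposition scale Gr n br alpha {x. P x = x} {x. P x = - x})"
proof -
  have n: "1 \<le> n" and graded: "graded_space scale Gr" and ml: "multilinear scale n br"
    and alpha_add: "\<And>x y. alpha (x + y) = alpha x + alpha y"
    using assms by (auto simp: n_hom_lie_color_def deg0_linear_def Vector_Spaces.linear_iff)
  note eigenspace_criterion = linear_involution.product_structure_iff_subalgebra_decomposition
    [where alpha = alpha, OF _ n graded ml alpha_add]
  have "subalgebra_decomposition scale Gr n br alpha {x. P x = x} {x. P x = - x}"
    if "product_structure scale Gr n br alpha P" for P
    using that product_structure_linear_involution eigenspace_criterion by blast
  moreover have "\<exists>P. product_structure scale Gr n br alpha P"
    if "subalgebra_decomposition scale Gr n br alpha Hp Hm" for Hp Hm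
  proof -
    have "vector_space scale" using graded by (simp add: graded_space_def)
    moreover have "module.subspace scale Hp" "module.subspace scale Hm"
      "\<And>v. \<exists>!p. fst p \<in> Hp \<and> snd p \<in> Hm \<and> v = fst p + snd p"
      using that by (simp_all add: subalgebra_decomposition_def graded_subalgebra_def)
    ultimately obtain P where "linear_involution scale P" "{x. P x = x} = Hp" "{x. P x = - x} = Hm"
      by (rule complementary_subspaces_reflection)
    then show ?thesis using that eigenspace_criterion by metis
  qed
  ultimately show ?thesis by blast
qed

end
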